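(* Let $m>2$ be a positive integer and let $n,k$ be positive integers. Then: (1) For all $i\in\{0,1,\dots,n-1\}$ and $j\in\{0,1,\dots,k-1\}$, $|\mathrm{WHom}^{ij}(P_m,P_n\square P_k)|=|\mathrm{WHom}^{(n-i-1)j}(P_m,P_n\square P_k)|=|\mathrm{WHom}^{i(k-j-1)}(P_m,P_n\square P_k)|=|\mathrm{WHom}^{(n-i-1)(k-j-1)}(P_m,P_n\square P_k)|$. (2) $|\mathrm{WHom}(P_m,P_{2n}\square P_{2k})|=4\sum_{i=0}^{n-1}\sum_{j=0}^{k-1}|\mathrm{WHom}^{ij}(P_m,P_{2n}\square P_{2k})|$. (3) $|\mathrm{WHom}(P_m,P_{2n+1}\square P_{2k})|=4\sum_{i=0}^{n-1}\sum_{j=0}^{k-1}|\mathrm{WHom}^{ij}(P_m,P_{2n+1}\square P_{2k})|+2\sum_{j=0}^{k-1}|\mathrm{WHom}^{nj}(P_m,P_{2n+1}\square P_{2k})|$. (4) $|\mathrm{WHom}(P_m,P_{2n}\square P_{2k+1})|=4\sum_{i=0}^{n-1}\sum_{j=0}^{k-1}|\mathrm{WHom}^{ij}(P_m,P_{2n}\square P_{2k+1})|+2\sum_{i=0}^{n-1}|\mathrm{WHom}^{ik}(P_m,P_{2n}\square P_{2k+1})|$. (5) $|\mathrm{WHom}(P_m,P_{2n+1}\square P_{2k+1})|=4\sum_{i=0}^{n-1}\sum_{j=0}^{k-1}|\mathrm{WHom}^{ij}(P_m,P_{2n+1}\square P_{2k+1})|+2\sum_{j=0}^{k-1}|\mathrm{WHom}^{nj}(P_m,P_{2n+1}\square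 P_{2k+1})|+2\sum_{i=0}^{n-1}|\mathrm{WHom}^{ik}(P_m,P_{2n+1}\square P_{2k+1})|+|\mathrm{WHom}^{nk}(P_m,P_{2n+1}\square P_{2k+1})|$.
   Context: For a positive integer $n$, $P_n$ denotes the path with vertex set $\{0,1,\dots,n-1\}$ and edge set $\{\{i,i+1\} : i=0,\dots,n-2\}$. The Cartesian product $P_n\square P_k$ has vertex set $\{0,\dots,n-1\}\times\{0,\dots,k-1\}$, with $\{(a,u),(b,v)\}$ an edge iff either $a=b$ and $\{u,v\}\in E(P_k)$, or $\{a,b\}\in E(P_n)$ and $u=v$. A weak homomorphism from a graph $G$ to a graph $H$ is a map $f:V(G)\to V(H)$ such that for every edge $\{x,y\}\in E(G)$, either $f(x)=f(y)$ or $\{f(x),f(y)\}\in E(H)$. $\mathrm{WHom}(G,H)$ is the set of weak homomorphisms from $G$ to $H$, and $\mathrm{WHom}^{ij}(P_m,P_n\square P_k)$ is the set of those $f\in\mathrm{WHom}(P_m,P_n\square P_k)$ with $f(0)=(i,j)$. *)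

theory Defs
  imports Main
begin

definition path_verts :: "nat \<Rightarrow> nat set" where
  "path_verts n = {0..<n}"

definition path_edge :: "nat \<Rightarrow> nat \<Rightarrow> nat \<Rightarrow> bool" where
  "path_edge n u v \<longleftrightarrow> u < n \<and> v < n \<and> (v = u + 1 \<or> u = v + 1)"

definition grid_verts :: "nat \<Rightarrow> nat \<Rightarrow> (nat \<times> nat) set" where
  "grid_verts n k = path_verts n \<times> path_verts k"

definition grid_edge :: "nat \<Rightarrow> nat \<Rightarrow> nat \<times> nat \<Rightarrow> nat \<times> nat \<Rightarrow> bool" where
  "grid_edge n k p q \<longleftrightarrow>
     (fst p = fst q \<and> fst p < n \<and> path_edge k (snd p) (snd q)) \<or>
     (path_edge n (fst p) (fst q) \<and> snd p = snd q \<and> snd p < k)"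

(* Weak homomorphisms P_m \<rightarrow> P_n \<box> P_k, represented as functions on nat that
   are arbitrary-but-fixed (undefined) outside {0..<m}, so that each map
   V(P_m) \<rightarrow> V(P_n \<box> P_k) corresponds to exactly one element. *)
definition WHom :: "nat \<Rightarrow> nat \<Rightarrow> nat \<Rightarrow> (nat \<Rightarrow> nat \<times> nat) set" where
  "WHom m n k = {f. (\<forall>x. x < m \<longrightarrow> f x \<in> grid_verts n k) \<and>
                   (\<forall>x. x \<ge> m \<longrightarrow> f x = undefined) \<and>
                   (\<forall>x y. path_edge m x y \<longrightarrow> f x = f y \<or> grid_edge n k (f x) (f y))}"

definition WHom_at :: "nat \<Rightarrow> nat \<Rightarrow> nat \<Rightarrow> nat \<Rightarrow> nat \<Rightarrow> (nat \<Rightarrow> nat \<times> nat) set" where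
  "WHom_at m n k i j = {f \<in> WHom m n k. f 0 = (i, j)}"

end

theory Submission
  imports Defs "HOL-Library.FuncSet"
begin

(* Reflecting P_n \<box> P_k in either coordinate is an involutive automorphism, and post-composing
   with it maps the weak homomorphisms starting at (i, j) bijectively onto those starting at the
   reflected vertex; this gives (1). Classifying WHom by the image of vertex 0 writes its size as a
   double sum over the grid, which the two reflections fold onto one quadrant: vertices off the
   middle row and column are counted four times, those on exactly one middle line twice, and the
   centre once. *)

definition postcomp :: "nat \<Rightarrow> (nat \<times> nat \<Rightarrow> nat \<times> nat) \<Rightarrow> (nat \<Rightarrow> nat \<times> nat) \<Rightarrow> nat \<Rightarrow> nat \<times> nat" where
  "postcomp m r f = (\<lambda>x. if x < m then r (f x) else undefined)"

lemma postcomp_in_WHom: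
  assumes "\<And>p. p \<in> grid_verts n k \<Longrightarrow> r p \<in> grid_verts n' k'"
    and "\<And>p q. grid_edge n k p q \<Longrightarrow> r p = r q \<or> grid_edge n' k' (r p) (r q)"
    and "f \<in> WHom m n k"
  shows "postcomp m r f \<in> WHom m n' k'"
proof -
  have "postcomp m r f x = postcomp m r f y \<or> grid_edge n' k' (postcomp m r f x) (postcomp m r f y)"
    if "path_edge m x y" for x y
  proof -
    have "x < m" "y < m"
      using that by (auto simp: path_edge_def)
    moreover have "f x = f y \<or> grid_edge n k (f x) (f y)"
      using that \<open>f \<in> WHom m n k\<close> by (simp add: WHom_def)
    ultimately show ?thesis
      using assms(2)[of "f x" "f y"] by (auto simp: postcomp_def)
  qed
  then show ?thesis
    using assms(1,3) by (simp add: WHom_def postcomp_def)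
qed

lemma card_WHom_at_involution:
  assumes maps: "\<And>p. p \<in> grid_verts n k \<Longrightarrow> r p \<in> grid_verts n k"
    and edges: "\<And>p q. grid_edge n k p q \<Longrightarrow> r p = r q \<or> grid_edge n k (r p) (r q)"
    and invol: "\<And>p. p \<in> grid_verts n k \<Longrightarrow> r (r p) = p"
    and "m > 0" and "(i, j) \<in> grid_verts n k" and "r (i, j) = (i', j')"
  shows "card (WHom_at m n k i j) = card (WHom_at m n k i' j')"
proof -
  have postcomp_invol: "postcomp m r (postcomp m r f) = f" if "f \<in> WHom m n k" for f
  proof
    fix x
    show "postcomp m r (postcomp m r f) x = f x"
      using that invol[of "f x"] by (auto simp: postcomp_def WHom_def)
  qed
  have "r (i', j') = (i, j)"
    using invol[OF \<open>(i, j) \<in> grid_verts n k\<close>] \<open>r (i, j) = (i', j')\<close> by simp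
  then have "bij_betw (postcomp m r) (WHom_at m n k i j) (WHom_at m n k i' j')"
    using postcomp_invol postcomp_in_WHom[OF maps edges] assms
    by (intro bij_betw_byWitness[where f' = "postcomp m r"]) (auto simp: WHom_at_def postcomp_def)
  then show ?thesis
    by (rule bij_betw_same_card)
qed

lemma card_WHom_at_flip_fst:
  assumes "m > 0" "i < n" "j < k"
  shows "card (WHom_at m n k i j) = card (WHom_at m n k (n - 1 - i) j)"
  by (rule card_WHom_at_involution[where r = "\<lambda>(a, b). (n - 1 - a, b)"])
    (use assms in \<open>auto simp: grid_verts_def path_verts_def grid_edge_def path_edge_def\<close>)

lemma card_WHom_at_flip_snd:
  assumes "m > 0" "i < n" "j < k"
  shows "card (WHom_at m n k i j) = card (WHom_at m n k i (k - 1 - j))"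
  by (rule card_WHom_at_involution[where r = "\<lambda>(a, b). (a, k - 1 - b)"])
    (use assms in \<open>auto simp: grid_verts_def path_verts_def grid_edge_def path_edge_def\<close>)

lemma card_WHom_at_reflections:
  assumes "m > 0" "i < n" "j < k"
  shows "card (WHom_at m n k i j) = card (WHom_at m n k (n - i - 1) j)"
    and "card (WHom_at m n k (n - i - 1) j) = card (WHom_at m n k i (k - j - 1))"
    and "card (WHom_at m n k i (k - j - 1)) = card (WHom_at m n k (n - i - 1) (k - j - 1))"
proof -
  have "n - i - 1 < n"
    using \<open>i < n\<close> by simp
  have fst: "card (WHom_at m n k i j) = card (WHom_at m n k (n - i - 1) j)"
    using card_WHom_at_flip_fst[OF assms] by simp
  have snd: "card (WHom_at m n k i j) = card (WHom_at m n k i (k - j - 1))"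
    using card_WHom_at_flip_snd[OF assms] by simp
  have fst_snd: "card (WHom_at m n k (n - i - 1) j) = card (WHom_at m n k (n - i - 1) (k - j - 1))"
    using card_WHom_at_flip_snd[OF \<open>m > 0\<close> \<open>n - i - 1 < n\<close> \<open>j < k\<close>] by simp
  show "card (WHom_at m n k i j) = card (WHom_at m n k (n - i - 1) j)"
    and "card (WHom_at m n k (n - i - 1) j) = card (WHom_at m n k i (k - j - 1))"
    and "card (WHom_at m n k i (k - j - 1)) = card (WHom_at m n k (n - i - 1) (k - j - 1))"
    using fst snd fst_snd by linarith+
qed

lemma finite_WHom: "finite (WHom m n k)"
proof (rule finite_subset)
  show "WHom m n k \<subseteq> PiE {..<m} (\<lambda>_. grid_verts n k)"
    by (auto simp: WHom_def PiE_def extensional_def)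
  show "finite (PiE {..<m} (\<lambda>_. grid_verts n k))"
    by (rule finite_PiE) (auto simp: grid_verts_def path_verts_def)
qed

lemma card_WHom_eq_sum_card_WHom_at:
  assumes "m > 0"
  shows "card (WHom m n k) = (\<Sum>i<n. \<Sum>j<k. card (WHom_at m n k i j))"
proof -
  have partition: "WHom m n k = (\<Union>p\<in>grid_verts n k. WHom_at m n k (fst p) (snd p))"
    using assms by (auto simp: WHom_def WHom_at_def)
  have "card (WHom m n k) = (\<Sum>p\<in>grid_verts n k. card (WHom_at m n k (fst p) (snd p)))"
    unfolding partition by (intro card_UN_disjoint)
      (auto simp: grid_verts_def path_verts_def WHom_at_def intro: finite_subset[OF _ finite_WHom])
  also have "\<dots> = (\<Sum>i<n. \<Sum>j<k. card (WHom_at m n k i j))"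
    by (simp add: grid_verts_def path_verts_def atLeast0LessThan sum.cartesian_product split_def)
  finally show ?thesis .
qed

lemma sum_lessThan_add_nat:
  fixes g :: "nat \<Rightarrow> 'a::comm_monoid_add"
  shows "(\<Sum>i<a + b. g i) = (\<Sum>i<a. g i) + (\<Sum>i<b. g (a + i))"
  by (induction b) (simp_all add: add.assoc)

lemma sum_lessThan_mirror_symmetric:
  fixes h :: "nat \<Rightarrow> 'a::comm_semiring_1"
  assumes "\<And>i. i < N \<Longrightarrow> h i = h (N - 1 - i)"
  shows "(\<Sum>i<N. h i) = 2 * (\<Sum>i<N div 2. h i) + (if odd N then h (N div 2) else 0)"
proof -
  define a where "a = N div 2"
  define c where "c = N mod 2"
  have N_split: "N = (a + c) + a"
    unfolding a_def c_def by presburger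
  have "(\<Sum>i<a. h (a + c + i)) = (\<Sum>i<a. h (a - Suc i))"
  proof (rule sum.cong)
    fix i
    assume "i \<in> {..<a}"
    then show "h (a + c + i) = h (a - Suc i)"
      using assms[of "a + c + i"] N_split by simp
  qed simp
  also have "\<dots> = (\<Sum>i<a. h i)"
    by (rule sum.nat_diff_reindex)
  finally have upper: "(\<Sum>i<a. h (a + c + i)) = (\<Sum>i<a. h i)" .
  have middle: "(\<Sum>i<c. h (a + i)) = (if odd N then h a else 0)"
    by (simp add: c_def odd_iff_mod_2_eq_one)
  have "(\<Sum>i<N. h i) = (\<Sum>i<a. h i) + (\<Sum>i<c. h (a + i)) + (\<Sum>i<a. h (a + c + i))"
    by (subst N_split) (simp only: sum_lessThan_add_nat)
  also have "\<dots> = 2 * (\<Sum>i<a. h i) + (if odd N then h a else 0)"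
    unfolding upper middle by (simp add: mult_2 add_ac)
  finally show ?thesis
    by (simp only: a_def)
qed

lemma double_sum_lessThan_mirror_symmetric:
  fixes c :: "nat \<Rightarrow> nat \<Rightarrow> 'a::comm_semiring_1"
  assumes row: "\<And>i j. i < N \<Longrightarrow> j < K \<Longrightarrow> c i j = c (N - 1 - i) j"
    and col: "\<And>i j. i < N \<Longrightarrow> j < K \<Longrightarrow> c i j = c i (K - 1 - j)"
  shows "(\<Sum>i<N. \<Sum>j<K. c i j) =
           4 * (\<Sum>i<N div 2. \<Sum>j<K div 2. c i j)
         + (if odd N then 2 * (\<Sum>j<K div 2. c (N div 2) j) else 0)
         + (if odd K then 2 * (\<Sum>i<N div 2. c i (K div 2)) else 0)
         + (if odd N \<and> odd K then c (N div 2) (K div 2) else 0)"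
proof -
  define r where "r i = 2 * (\<Sum>j<K div 2. c i j) + (if odd K then c i (K div 2) else 0)" for i
  have row_sum: "(\<Sum>j<K. c i j) = r i" if "i < N" for i
    unfolding r_def by (rule sum_lessThan_mirror_symmetric) (rule col[OF that])
  have "(\<Sum>i<N. \<Sum>j<K. c i j) = 2 * (\<Sum>i<N div 2. \<Sum>j<K. c i j) + (if odd N then \<Sum>j<K. c (N div 2) j else 0)"
  proof (rule sum_lessThan_mirror_symmetric)
    fix i
    assume "i < N"
    then show "(\<Sum>j<K. c i j) = (\<Sum>j<K. c (N - 1 - i) j)"
      by (intro sum.cong refl row) auto
  qed
  also have "(\<Sum>i<N div 2. \<Sum>j<K. c i j) = (\<Sum>i<N div 2. r i)"
    by (intro sum.cong refl row_sum) auto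
  also have "(if odd N then \<Sum>j<K. c (N div 2) j else 0) = (if odd N then r (N div 2) else 0)"
    using row_sum[of "N div 2"] by (auto elim: oddE)
  finally show ?thesis
    by (cases "odd N"; cases "odd K") (simp_all add: r_def sum.distrib sum_distrib_left algebra_simps)
qed

theorem lemma1:
  fixes m n k :: nat
  assumes "m > 2" and "n > 0" and "k > 0"
  shows
   "(\<forall>i<n. \<forall>j<k.
       card (WHom_at m n k i j) = card (WHom_at m n k (n - i - 1) j) \<and>
       card (WHom_at m n k (n - i - 1) j) = card (WHom_at m n k i (k - j - 1)) \<and>
       card (WHom_at m n k i (k - j - 1)) = card (WHom_at m n k (n - i - 1) (k - j - 1)))
    \<and> card (WHom m (2*n) (2*k)) =
        4 * (\<Sum>i<n. \<Sum>j<k. card (WHom_at m (2*n) (2*k) i j))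
    \<and> card (WHom m (2*n+1) (2*k)) =
        4 * (\<Sum>i<n. \<Sum>j<k. card (WHom_at m (2*n+1) (2*k) i j))
        + 2 * (\<Sum>j<k. card (WHom_at m (2*n+1) (2*k) n j))
    \<and> card (WHom m (2*n) (2*k+1)) =
        4 * (\<Sum>i<n. \<Sum>j<k. card (WHom_at m (2*n) (2*k+1) i j))
        + 2 * (\<Sum>i<n. card (WHom_at m (2*n) (2*k+1) i k))
    \<and> card (WHom m (2*n+1) (2*k+1)) =
        4 * (\<Sum>i<n. \<Sum>j<k. card (WHom_at m (2*n+1) (2*k+1) i j))
        + 2 * (\<Sum>j<k. card (WHom_at m (2*n+1) (2*k+1) n j))
        + 2 * (\<Sum>i<n. card (WHom_at m (2*n+1) (2*k+1) i k))
        + card (WHom_at m (2*n+1) (2*k+1) n k)"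
proof -
  have "m > 0"
    using \<open>m > 2\<close> by simp
  let ?c = "\<lambda>N K i j. card (WHom_at m N K i j)"
  have card_WHom: "card (WHom m N K) =
           4 * (\<Sum>i<N div 2. \<Sum>j<K div 2. ?c N K i j)
         + (if odd N then 2 * (\<Sum>j<K div 2. ?c N K (N div 2) j) else 0)
         + (if odd K then 2 * (\<Sum>i<N div 2. ?c N K i (K div 2)) else 0)
         + (if odd N \<and> odd K then ?c N K (N div 2) (K div 2) else 0)" for N K
    unfolding card_WHom_eq_sum_card_WHom_at[OF \<open>m > 0\<close>]
    using card_WHom_at_flip_fst[OF \<open>m > 0\<close>] card_WHom_at_flip_snd[OF \<open>m > 0\<close>]
    by (rule double_sum_lessThan_mirror_symmetric)
  show ?thesis
    by (intro conjI allI impI card_WHom_at_reflections[OF \<open>m > 0\<close>])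
      (simp_all add: card_WHom[of "2*n" "2*k"] card_WHom[of "Suc (2*n)" "2*k"]
        card_WHom[of "2*n" "Suc (2*k)"] card_WHom[of "Suc (2*n)" "Suc (2*k)"])
qed

end
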